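(* Let $R$ be a $*$-ring. Then the following are equivalent: (1) $R$ is strongly $J$-$*$-clean. (2) $R$ is uniquely clean and $a-a^*\in J(R)$ for every $a\in R$. (3) $R$ is uniquely clean and $a+a^*\in J(R)$ for every $a\in R$.
   Context: All rings are associative with identity. A $*$-ring is a ring $R$ with an involution $*$, i.e. a map $a\mapsto a^*$ with $(a+b)^*=a^*+b^*$, $(ab)^*=b^*a^*$, $(a^* )^*=a$. $J(R)$ denotes the Jacobson radical of $R$. A projection is an element $e$ with $e^2=e=e^*$. $R$ is strongly $J$-$*$-clean if every $a\in R$ can be written $a=e+u$ with $e$ a projection, $u\in J(R)$ and $ae=ea$. $R$ is uniquely clean if every element of $R$ can be written uniquely as the sum of an idempotent and a unit. *)

theory Defs
  imports Main
begin

definition is_involution :: "('a::ring_1 \<Rightarrow> 'a) \<Rightarrow> bool" where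
  "is_involution st \<longleftrightarrow>
     (\<forall>a b. st (a + b) = st a + st b) \<and>
     (\<forall>a b. st (a * b) = st b * st a) \<and>
     (\<forall>a. st (st a) = a)"

definition left_ideal :: "'a::ring_1 set \<Rightarrow> bool" where
  "left_ideal I \<longleftrightarrow> 0 \<in> I \<and> (\<forall>x\<in>I. \<forall>y\<in>I. x + y \<in> I) \<and> (\<forall>x\<in>I. - x \<in> I)
     \<and> (\<forall>r. \<forall>x\<in>I. r * x \<in> I)"

definition maximal_left_ideal :: "'a::ring_1 set \<Rightarrow> bool" where
  "maximal_left_ideal M \<longleftrightarrow> left_ideal M \<and> M \<noteq> UNIV \<and>
     (\<forall>I. left_ideal I \<and> M \<subseteq> I \<longrightarrow> I = M \<or> I = UNIV)"

definition jacobson :: "'a::ring_1 set" where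
  "jacobson = \<Inter> {M. maximal_left_ideal M}"

definition is_unit_r :: "'a::ring_1 \<Rightarrow> bool" where
  "is_unit_r u \<longleftrightarrow> (\<exists>v. u * v = 1 \<and> v * u = 1)"

definition idem :: "'a::ring_1 \<Rightarrow> bool" where
  "idem e \<longleftrightarrow> e * e = e"

definition projection :: "('a::ring_1 \<Rightarrow> 'a) \<Rightarrow> 'a \<Rightarrow> bool" where
  "projection st e \<longleftrightarrow> e * e = e \<and> st e = e"

definition strongly_J_star_clean :: "('a::ring_1 \<Rightarrow> 'a) \<Rightarrow> bool" where
  "strongly_J_star_clean st \<longleftrightarrow>
     (\<forall>a. \<exists>e u. projection st e \<and> u \<in> jacobson \<and> a = e + u \<and> a * e = e * a)"

definition uniquely_clean :: "'a::ring_1 itself \<Rightarrow> bool" where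
  "uniquely_clean _ \<longleftrightarrow>
     (\<forall>a::'a. \<exists>!p. idem (fst p) \<and> is_unit_r (snd p) \<and> a = fst p + snd p)"

end

theory Submission
  imports Defs
begin

text \<open>Both conditions force idempotents to be central. In a uniquely clean ring, for an idempotent
\<open>e\<close> and \<open>n = e x (1 - e)\<close> the two clean decompositions \<open>(1 - (e + n)) + (2e - 1 + n)\<close> and
\<open>(1 - e) + (2e - 1)\<close> of the same element give \<open>n = 0\<close>; in a strongly J-*-clean ring every
idempotent is a projection, and applying \<open>*\<close> to the idempotent \<open>e + n\<close> gives \<open>n = 0\<close> again.
Commuting idempotents that agree modulo \<open>J\<close> coincide, because their difference \<open>x\<close> satisfies
\<open>x\<^sup>3 = x\<close>. Hence a decomposition \<open>a = e + j\<close> with \<open>e\<close> a projection and \<open>j \<in> J\<close> yields the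
clean decomposition \<open>a = (1 - e) + (2e - 1 + j)\<close>, unique because units are \<open>1\<close> modulo \<open>J\<close>.
Conversely, in a uniquely clean ring all units are \<open>1\<close> modulo \<open>J\<close>, so \<open>2 \<in> J\<close>; this makes
\<open>a - a\<^sup>*\<close> and \<open>a + a\<^sup>*\<close> interchangeable modulo \<open>J\<close> and turns \<open>a = g + v\<close> into
\<open>a = (1 - g) + (2g + v - 1)\<close>, where \<open>1 - g\<close> is a projection since \<open>(1 - g) - (1 - g)\<^sup>* \<in> J\<close>.\<close>
lemma left_idealD:
  assumes "left_ideal I"
  shows "0 \<in> I" and "x \<in> I \<Longrightarrow> y \<in> I \<Longrightarrow> x + y \<in> I" and "x \<in> I \<Longrightarrow> - x \<in> I"
    and "x \<in> I \<Longrightarrow> r * x \<in> I"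
  using assms unfolding left_ideal_def by blast+

lemma left_ideal_diff: "left_ideal I \<Longrightarrow> x \<in> I \<Longrightarrow> y \<in> I \<Longrightarrow> x - y \<in> I"
  by (metis diff_conv_add_uminus left_idealD(2,3))

lemma left_ideal_one_imp_UNIV: "left_ideal (I :: 'a::ring_1 set) \<Longrightarrow> 1 \<in> I \<Longrightarrow> I = UNIV"
  by (metis UNIV_eq_I left_idealD(4) mult.right_neutral)

lemma one_not_in_maximal_left_ideal: "maximal_left_ideal (M :: 'a::ring_1 set) \<Longrightarrow> 1 \<notin> M"
  unfolding maximal_left_ideal_def using left_ideal_one_imp_UNIV by blast

lemma left_ideal_add_principal:
  assumes "left_ideal M"
  shows "left_ideal {m + r * a | m r. m \<in> M}"
  unfolding left_ideal_def
proof (intro conjI ballI allI)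
  show "0 \<in> {m + r * a | m r. m \<in> M}"
    using left_idealD(1)[OF assms] by (metis (mono_tags, lifting) add_0 mem_Collect_eq mult_zero_left)
next
  fix x y assume "x \<in> {m + r * a | m r. m \<in> M}" "y \<in> {m + r * a | m r. m \<in> M}"
  then obtain m r m' r' where "x = m + r * a" "y = m' + r' * a" "m \<in> M" "m' \<in> M" by blast
  then have "x + y = (m + m') + (r + r') * a" "m + m' \<in> M"
    using left_idealD(2)[OF assms] by (auto simp: algebra_simps)
  then show "x + y \<in> {m + r * a | m r. m \<in> M}" by blast
next
  fix x assume "x \<in> {m + r * a | m r. m \<in> M}"
  then obtain m r where "x = m + r * a" "m \<in> M" by blast
  then have "- x = - m + (- r) * a" "- m \<in> M"
    using left_idealD(3)[OF assms] by auto
  then show "- x \<in> {m + r * a | m r. m \<in> M}" by blast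
next
  fix s x assume "x \<in> {m + r * a | m r. m \<in> M}"
  then obtain m r where "x = m + r * a" "m \<in> M" by blast
  then have "s * x = s * m + (s * r) * a" "s * m \<in> M"
    using left_idealD(4)[OF assms] by (auto simp: algebra_simps)
  then show "s * x \<in> {m + r * a | m r. m \<in> M}" by blast
qed

lemma left_ideal_Union_chain:
  assumes "C \<noteq> {}" "\<forall>K\<in>C. left_ideal K" "\<forall>X\<in>C. \<forall>Y\<in>C. X \<subseteq> Y \<or> Y \<subseteq> X"
  shows "left_ideal (\<Union>C)"
  unfolding left_ideal_def
proof (intro conjI ballI allI)
  show "0 \<in> \<Union>C" using assms(1,2) left_idealD(1) by blast
next
  fix x y assume "x \<in> \<Union>C" "y \<in> \<Union>C"
  then obtain X Y where "X \<in> C" "Y \<in> C" "x \<in> X" "y \<in> Y" by blast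
  with assms(3) obtain Z where "Z \<in> C" "x \<in> Z" "y \<in> Z" by blast
  then show "x + y \<in> \<Union>C" using assms(2) left_idealD(2) by blast
qed (use assms(2) left_idealD(3,4) in blast)+

lemma maximal_left_ideal_containing:
  fixes I :: "'a::ring_1 set"
  assumes "left_ideal I" "1 \<notin> I"
  obtains M where "maximal_left_ideal M" "I \<subseteq> M"
proof -
  let ?A = "{K. left_ideal K \<and> I \<subseteq> K \<and> (1::'a) \<notin> K}"
  have "\<exists>M\<in>?A. \<forall>X\<in>?A. M \<subseteq> X \<longrightarrow> X = M"
  proof (rule subset_Zorn_nonempty)
    fix C assume "C \<noteq> {}" "subset.chain ?A C"
    then show "\<Union>C \<in> ?A"
      using left_ideal_Union_chain[of C] unfolding subset_chain_def by blast
  qed (use assms in blast)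
  then obtain M where M: "M \<in> ?A" "\<forall>X\<in>?A. M \<subseteq> X \<longrightarrow> X = M" by blast
  have "maximal_left_ideal M"
    unfolding maximal_left_ideal_def
    using M left_ideal_one_imp_UNIV by blast
  with M show thesis using that by blast
qed

lemma not_left_invertible_in_maximal_left_ideal:
  fixes a :: "'a::ring_1"
  assumes "\<nexists>v. v * a = 1"
  obtains M where "maximal_left_ideal M" "a \<in> M"
proof -
  have "left_ideal {m + r * a | m r. m \<in> {0}}"
    by (rule left_ideal_add_principal) (simp add: left_ideal_def)
  moreover have "1 \<notin> {m + r * a | m r. m \<in> {0}}" using assms by auto
  ultimately obtain M where "maximal_left_ideal M" "{m + r * a | m r. m \<in> {0}} \<subseteq> M"
    by (rule maximal_left_ideal_containing)
  moreover have "a = 0 + 1 * a" by simp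
  then have "a \<in> {m + r * a | m r. m \<in> {0}}" by blast
  ultimately show thesis using that by blast
qed

lemma left_ideal_jacobson: "left_ideal (jacobson :: 'a::ring_1 set)"
  unfolding left_ideal_def jacobson_def maximal_left_ideal_def by auto

lemmas jacobson_add = left_idealD(2)[OF left_ideal_jacobson]
  and jacobson_minus = left_idealD(3)[OF left_ideal_jacobson]
  and jacobson_mult_left = left_idealD(4)[OF left_ideal_jacobson]
  and jacobson_diff = left_ideal_diff[OF left_ideal_jacobson]

lemma jacobson_one_add_left_invertible:
  fixes x :: "'a::ring_1"
  assumes "x \<in> jacobson"
  shows "\<exists>v. v * (1 + x) = 1"
proof (rule ccontr)
  assume "\<nexists>v. v * (1 + x) = 1"
  then obtain M where M: "maximal_left_ideal M" "1 + x \<in> M"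
    by (rule not_left_invertible_in_maximal_left_ideal)
  moreover have "x \<in> M" using M(1) assms unfolding jacobson_def by blast
  ultimately have "(1 + x) - x \<in> M"
    using left_ideal_diff maximal_left_ideal_def by blast
  then have "1 \<in> M" by simp
  with M(1) show False using one_not_in_maximal_left_ideal by blast
qed

lemma jacobson_iff_left_invertible:
  "x \<in> jacobson \<longleftrightarrow> (\<forall>r. \<exists>s. s * (1 - r * x) = (1 :: 'a::ring_1))"
proof
  assume "x \<in> jacobson"
  then show "\<forall>r. \<exists>s. s * (1 - r * x) = 1"
    using jacobson_one_add_left_invertible jacobson_minus jacobson_mult_left
    by (metis diff_conv_add_uminus)
next
  assume inv: "\<forall>r. \<exists>s. s * (1 - r * x) = 1"
  show "x \<in> jacobson"
  proof (rule ccontr)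
    assume "x \<notin> jacobson"
    then obtain M where M: "maximal_left_ideal M" "x \<notin> M" unfolding jacobson_def by blast
    let ?K = "{m + r * x | m r. m \<in> M}"
    have "M \<subseteq> ?K"
    proof
      fix m assume "m \<in> M"
      moreover have "m = m + 0 * x" by simp
      ultimately show "m \<in> ?K" by blast
    qed
    moreover have "x = 0 + 1 * x" "0 \<in> M"
      using left_idealD(1) M(1) maximal_left_ideal_def by auto
    then have "x \<in> ?K" by blast
    ultimately have "?K = UNIV"
      using M left_ideal_add_principal unfolding maximal_left_ideal_def by blast
    then obtain m r where mr: "1 = m + r * x" "m \<in> M" by blast
    obtain s where "s * (1 - r * x) = 1" using inv by blast
    moreover have "1 - r * x = m" using mr(1) by (simp add: algebra_simps)
    ultimately have "s * m = 1" by simp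
    then have "1 \<in> M" using mr(2) M(1) left_idealD(4) maximal_left_ideal_def by metis
    with M(1) show False using one_not_in_maximal_left_ideal by blast
  qed
qed

lemma jacobson_unit:
  fixes x :: "'a::ring_1"
  assumes "x \<in> jacobson"
  shows "is_unit_r (1 + x)"
proof -
  obtain v where v: "v * (1 + x) = 1" using jacobson_one_add_left_invertible assms by blast
  have "v = 1 + - (v * x)" using v by (simp add: algebra_simps)
  moreover have "- (v * x) \<in> jacobson" using assms jacobson_mult_left jacobson_minus by blast
  ultimately obtain w where w: "w * v = 1" using jacobson_one_add_left_invertible by metis
  have "w = w * (v * (1 + x))" using v by simp
  also have "\<dots> = 1 + x" using w by (simp add: mult.assoc[symmetric])
  finally show ?thesis unfolding is_unit_r_def using v w by blast
qed

lemma jacobson_mult_right: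
  fixes x :: "'a::ring_1"
  assumes "x \<in> jacobson"
  shows "x * s \<in> jacobson"
  unfolding jacobson_iff_left_invertible
proof
  fix r
  have "- (s * (r * x)) \<in> jacobson" using assms jacobson_mult_left jacobson_minus by blast
  then obtain c where c: "c * (1 + - (s * (r * x))) = 1"
    using jacobson_unit unfolding is_unit_r_def by blast
  have "(1 + r * x * c * s) * (1 - r * (x * s))
      = 1 - r * x * s + r * x * (c * (1 + - (s * (r * x)))) * s"
    by (simp add: algebra_simps)
  also have "\<dots> = 1" using c by (simp add: mult.assoc)
  finally show "\<exists>t. t * (1 - r * (x * s)) = 1" by blast
qed

lemma unit_add_jacobson:
  fixes w :: "'a::ring_1"
  assumes w: "is_unit_r w" and u: "u \<in> jacobson"
  shows "is_unit_r (w + u)"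
proof -
  obtain v where v: "w * v = 1" "v * w = 1" using w unfolding is_unit_r_def by blast
  obtain c where c: "c * (1 + v * u) = 1" "(1 + v * u) * c = 1"
    using jacobson_unit jacobson_mult_left[OF u] unfolding is_unit_r_def by blast
  have wu: "w + u = w * (1 + v * u)" by (simp add: distrib_left mult.assoc[symmetric] v)
  have "(w + u) * (c * v) = w * ((1 + v * u) * c) * v" unfolding wu by (simp add: mult.assoc)
  moreover have "(c * v) * (w + u) = c * (v * w) * (1 + v * u)" unfolding wu by (simp add: mult.assoc)
  ultimately show ?thesis unfolding is_unit_r_def using c v by auto
qed
lemma involution_add: "is_involution st \<Longrightarrow> st (a + b) = st a + st b"
  and involution_mult: "is_involution st \<Longrightarrow> st (a * b) = st b * st a"
  and involution_involutive: "is_involution st \<Longrightarrow> st (st a) = a"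
  unfolding is_involution_def by blast+

lemma involution_minus:
  assumes "is_involution st" shows "st (- a) = - st a"
proof -
  have "st a + st (- a) = st 0" using involution_add[OF assms, of a "- a"] by simp
  moreover have "st 0 = 0" using involution_add[OF assms, of 0 0] by simp
  ultimately show ?thesis by (simp add: eq_neg_iff_add_eq_0 add.commute)
qed

lemma involution_diff: "is_involution st \<Longrightarrow> st (a - b) = st a - st b"
  using involution_add[of st a "- b"] by (simp add: involution_minus)

lemma involution_one:
  assumes "is_involution st" shows "st 1 = (1 :: 'a::ring_1)"
  using involution_mult[OF assms, of 1 "st 1"] by (simp add: involution_involutive[OF assms])
lemma jacobson_involution:
  fixes x :: "'a::ring_1"
  assumes inv: "is_involution st" and x: "x \<in> jacobson"
  shows "st x \<in> jacobson"
  unfolding jacobson_iff_left_invertible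
proof
  fix r
  obtain c where "(1 + - (x * st r)) * c = 1"
    using jacobson_unit jacobson_minus jacobson_mult_right[OF x] unfolding is_unit_r_def by blast
  then have "st ((1 + - (x * st r)) * c) = st 1" by simp
  then have "st c * (1 - r * st x) = 1"
    by (simp add: inv involution_diff involution_mult involution_add involution_minus
        involution_one involution_involutive)
  then show "\<exists>s. s * (1 - r * st x) = 1" by blast
qed

lemma idem_unit_eq_one:
  fixes e :: "'a::ring_1"
  assumes "e * e = e" "is_unit_r e"
  shows "e = 1"
  by (metis assms is_unit_r_def mult.assoc mult_1_left)

lemma idem_reflection_square: "(e :: 'a::ring_1) * e = e \<Longrightarrow> (2 * e - 1) * (2 * e - 1) = 1"
  by (simp add: algebra_simps mult_2 mult_2_right)

lemma idem_one_minus: "(e :: 'a::ring_1) * e = e \<Longrightarrow> (1 - e) * (1 - e) = 1 - e"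
  by (simp add: algebra_simps)

lemma commuting_idems_eq_mod_jacobson:
  fixes e f :: "'a::ring_1"
  assumes e: "e * e = e" and f: "f * f = f" and ef: "e * f = f * e" and d: "e - f \<in> jacobson"
  shows "e = f"
proof -
  let ?x = "e - f"
  have e2: "\<And>y. e * (e * y) = e * y" and f2: "\<And>y. f * (f * y) = f * y"
    and ef2: "\<And>y. f * (e * y) = e * (f * y)"
    using e f ef by (metis mult.assoc)+
  have "?x * ?x * ?x = ?x" by (simp add: algebra_simps e f ef e2 f2 ef2)
  then have x0: "?x * (1 + - (?x * ?x)) = 0" by (simp add: algebra_simps)
  obtain c where c: "(1 + - (?x * ?x)) * c = 1"
    using jacobson_unit jacobson_minus jacobson_mult_left[OF d] unfolding is_unit_r_def by blast
  have "?x = ?x * (1 + - (?x * ?x)) * c" using c by (simp add: mult.assoc)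
  then show ?thesis using x0 by simp
qed

definition abelian :: "'a::ring_1 itself \<Rightarrow> bool" where
  "abelian _ \<longleftrightarrow> (\<forall>e x :: 'a. e * e = e \<longrightarrow> e * x = x * e)"

lemma abelianD: "abelian TYPE('a::ring_1) \<Longrightarrow> (e :: 'a) * e = e \<Longrightarrow> e * x = x * e"
  unfolding abelian_def by blast

lemma abelianI_corner:
  assumes corner: "\<And>(e :: 'a::ring_1) x. e * e = e \<Longrightarrow> e * x * (1 - e) = 0"
  shows "abelian TYPE('a)"
  unfolding abelian_def
proof (intro allI impI)
  fix e x :: 'a assume e: "e * e = e"
  have "e * x * (1 - e) = 0" using corner e by blast
  then have "e * x = e * x * e" by (simp add: right_diff_distrib)
  moreover have "(1 - e) * x * (1 - (1 - e)) = 0" using corner idem_one_minus[OF e] by blast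
  then have "x * e = e * x * e" by (simp add: left_diff_distrib)
  ultimately show "e * x = x * e" by simp
qed

lemma abelian_left_inverse_imp_right_inverse:
  fixes a b :: "'a::ring_1"
  assumes "abelian TYPE('a)" and ab: "a * b = 1"
  shows "b * a = 1"
proof -
  have "(b * a) * (b * a) = b * (a * b) * a" by (simp add: mult.assoc)
  then have "a * (b * a) = (b * a) * a" using abelianD[OF assms(1), of "b * a" a] ab by simp
  then have "a = b * a * a" using ab by (simp add: mult.assoc[symmetric])
  then have "a * b = b * a * (a * b)" by (metis mult.assoc)
  then show ?thesis using ab by simp
qed

lemma uniquely_clean_exists:
  assumes "uniquely_clean TYPE('a::ring_1)"
  obtains e v where "e * e = e" "is_unit_r v" "(a :: 'a) = e + v"
proof -
  have "\<exists>p. idem (fst p) \<and> is_unit_r (snd p) \<and> a = fst p + snd p"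
    using assms unfolding uniquely_clean_def by blast
  then show thesis using that unfolding idem_def by blast
qed

lemma uniquely_clean_unique:
  assumes "uniquely_clean TYPE('a::ring_1)"
    and "e * e = e" "is_unit_r v" "f * f = f" "is_unit_r w" "e + v = (f + w :: 'a)"
  shows "e = f"
proof -
  have "\<exists>!p. idem (fst p) \<and> is_unit_r (snd p) \<and> e + v = fst p + snd p"
    using assms(1) unfolding uniquely_clean_def by blast
  moreover have "idem (fst (e, v)) \<and> is_unit_r (snd (e, v)) \<and> e + v = fst (e, v) + snd (e, v)"
    and "idem (fst (f, w)) \<and> is_unit_r (snd (f, w)) \<and> e + v = fst (f, w) + snd (f, w)"
    using assms(2-) unfolding idem_def by simp_all
  ultimately have "(e, v) = (f, w)" by blast
  then show ?thesis by simp
qed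
lemma uniquely_clean_abelian:
  assumes uc: "uniquely_clean TYPE('a::ring_1)"
  shows "abelian TYPE('a)"
proof (rule abelianI_corner)
  fix e x :: 'a assume e: "e * e = e"
  let ?n = "e * x * (1 - e)"
  have e2: "\<And>y. e * (e * y) = e * y" using e by (metis mult.assoc)
  have "(1 - (e + ?n)) * (1 - (e + ?n)) = 1 - (e + ?n)"
    by (simp add: algebra_simps e e2)
  moreover have "(2 * e - 1 + ?n) * (2 * e - 1 + ?n) = 1"
    by (simp add: algebra_simps mult_2 mult_2_right e e2)
  then have "is_unit_r (2 * e - 1 + ?n)" unfolding is_unit_r_def by blast
  moreover have "is_unit_r (2 * e - 1)"
    unfolding is_unit_r_def using idem_reflection_square[OF e] by blast
  moreover have "1 - (e + ?n) + (2 * e - 1 + ?n) = (1 - e) + (2 * e - 1)"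
    by (simp add: algebra_simps)
  ultimately have "1 - (e + ?n) = 1 - e"
    using uniquely_clean_unique[OF uc] idem_one_minus[OF e] by blast
  then show "?n = 0" by simp
qed

lemma uniquely_clean_idem_eq_zero:
  fixes e w :: "'a::ring_1"
  assumes uc: "uniquely_clean TYPE('a)" and e: "e * e = e"
    and w: "is_unit_r w" and ew: "is_unit_r (1 - e * w)"
  shows "e = 0"
proof -
  obtain w' where w': "w * w' = 1" "w' * w = 1" using w unfolding is_unit_r_def by blast
  have e2: "\<And>y. e * (e * y) = e * y" using e by (metis mult.assoc)
  have "\<And>y. y * e = e * y" using abelianD[OF uniquely_clean_abelian[OF uc] e] by simp
  then have cen: "w * e = e * w" "w' * e = e * w'"
    "\<And>z. w * (e * z) = e * (w * z)" "\<And>z. w' * (e * z) = e * (w' * z)"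
    by (metis mult.assoc)+
  have "((1 - e) - e * w) * ((1 - e) - e * w') = (1 - e) + e * (w * w')"
    "((1 - e) - e * w') * ((1 - e) - e * w) = (1 - e) + e * (w' * w)"
    by (simp_all add: algebra_simps e e2 cen)
  then have "is_unit_r ((1 - e) - e * w)" unfolding is_unit_r_def using w' by auto
  moreover have "0 + (1 - e * w) = e + ((1 - e) - e * w)" by simp
  moreover have "(0 :: 'a) * 0 = 0" by simp
  ultimately show "e = 0" using uniquely_clean_unique[OF uc _ ew e] by metis
qed

lemma uniquely_clean_unit_minus_one_jacobson:
  fixes w :: "'a::ring_1"
  assumes uc: "uniquely_clean TYPE('a)" and w: "is_unit_r w"
  shows "w - 1 \<in> jacobson"
  unfolding jacobson_iff_left_invertible
proof
  fix r
  \<comment> \<open>Write \<open>1 - r (w - 1) = e + v\<close>; unit-ness of \<open>v\<close> makes \<open>1 - e w\<close> left invertible, which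
      forces \<open>e = 0\<close>.\<close>
  obtain e v where e: "e * e = e" and v: "is_unit_r v" and ev: "1 - r * (w - 1) = e + v"
    by (rule uniquely_clean_exists[OF uc])
  have ab: "abelian TYPE('a)" using uniquely_clean_abelian[OF uc] .
  obtain v' where v': "v' * v = 1" "v * v' = 1" using v unfolding is_unit_r_def by blast
  have e2: "\<And>y. e * (e * y) = e * y" using e by (metis mult.assoc)
  have "\<And>y. y * e = e * y" using abelianD[OF ab e] by simp
  then have cen: "r * e = e * r" "w * e = e * w" "v' * e = e * v'"
    "\<And>z. r * (e * z) = e * (r * z)" "\<And>z. w * (e * z) = e * (w * z)"
    "\<And>z. v' * (e * z) = e * (v' * z)"
    by (metis mult.assoc)+
  have "e * v = e * (1 - r * (w - 1)) - e * e" using ev by (simp add: algebra_simps)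
  then have ev2: "e * v = e * (r * (1 - w))" by (simp add: algebra_simps e cen)
  have "(v' * e * r + (1 - e)) * (1 - e * w) = v' * (e * (r * (1 - w))) + (1 - e)"
    by (simp add: algebra_simps e e2 cen)
  also have "\<dots> = e * (v' * v) + (1 - e)" by (simp only: ev2[symmetric] cen(6))
  also have "\<dots> = 1" using v' by simp
  finally have left: "(v' * e * r + (1 - e)) * (1 - e * w) = 1" .
  then have "is_unit_r (1 - e * w)"
    using abelian_left_inverse_imp_right_inverse[OF ab left] unfolding is_unit_r_def by blast
  then have "e = 0" using uniquely_clean_idem_eq_zero[OF uc e w] by blast
  then show "\<exists>s. s * (1 - r * (w - 1)) = 1" using ev v' by auto
qed

lemma uniquely_clean_two_jacobson:
  assumes "uniquely_clean TYPE('a::ring_1)"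
  shows "(2 :: 'a) \<in> jacobson"
proof -
  have "is_unit_r (- 1 :: 'a)" unfolding is_unit_r_def by (rule exI[of _ "- 1"]) simp
  then have "- (- 1 - 1 :: 'a) \<in> jacobson"
    using uniquely_clean_unit_minus_one_jacobson[OF assms] jacobson_minus by blast
  then show ?thesis by simp
qed

lemma strongly_J_star_cleanE:
  assumes "strongly_J_star_clean st"
  obtains e u where "e * e = e" "st e = e" "u \<in> jacobson" "a = e + u" "a * e = e * a"
  using assms unfolding strongly_J_star_clean_def projection_def by blast

lemma strongly_J_star_clean_idem_selfadjoint:
  fixes f :: "'a::ring_1"
  assumes "strongly_J_star_clean st" and f: "f * f = f"
  shows "st f = f"
proof -
  obtain e u where e: "e * e = e" "st e = e" and u: "u \<in> jacobson" "f = e + u" "f * e = e * f"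
    by (rule strongly_J_star_cleanE[OF assms(1)])
  have "f = e" using commuting_idems_eq_mod_jacobson[OF f e(1)] u by simp
  with e show ?thesis by simp
qed

lemma strongly_J_star_clean_abelian:
  fixes st :: "'a::ring_1 \<Rightarrow> 'a"
  assumes inv: "is_involution st" and sj: "strongly_J_star_clean st"
  shows "abelian TYPE('a)"
proof (rule abelianI_corner)
  fix g y :: 'a assume g: "g * g = g"
  let ?n = "g * y * (1 - g)"
  have g2: "\<And>z. g * (g * z) = g * z" using g by (metis mult.assoc)
  have "(g + ?n) * (g + ?n) = g + ?n" by (simp add: algebra_simps g g2)
  then have "st (g + ?n) = g + ?n" using strongly_J_star_clean_idem_selfadjoint[OF sj] by blast
  moreover have "st (g + ?n) = g + (1 - g) * (st y * g)"
    using strongly_J_star_clean_idem_selfadjoint[OF sj g]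
    by (simp add: inv involution_add involution_mult involution_diff involution_one)
  ultimately have "?n = (1 - g) * (st y * g)" by simp
  then have "g * ?n = g * ((1 - g) * (st y * g))" by simp
  moreover have "g * ?n = ?n" by (simp add: algebra_simps g g2)
  moreover have "g * ((1 - g) * (st y * g)) = 0" by (simp add: algebra_simps g g2)
  ultimately show "?n = 0" by simp
qed

lemma strongly_J_star_clean_diff_involution_jacobson:
  fixes st :: "'a::ring_1 \<Rightarrow> 'a"
  assumes inv: "is_involution st" and sj: "strongly_J_star_clean st"
  shows "a - st a \<in> jacobson"
proof -
  obtain e u where e: "st e = e" and u: "u \<in> jacobson" and a: "a = e + u"
    by (rule strongly_J_star_cleanE[OF sj])
  have "a - st a = u - st u" using e a by (simp add: involution_add[OF inv])
  moreover have "u - st u \<in> jacobson" using u jacobson_diff jacobson_involution[OF inv] by blast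
  ultimately show ?thesis by simp
qed

lemma uniquely_clean_if_abelian_idem_add_jacobson:
  assumes decomp: "\<And>a :: 'a::ring_1. \<exists>e u. e * e = e \<and> u \<in> jacobson \<and> a = e + u"
    and ab: "abelian TYPE('a)"
  shows "uniquely_clean TYPE('a)"
proof -
  have unit: "w - 1 \<in> jacobson" if w: "is_unit_r w" for w :: 'a
  proof -
    obtain e u where eu: "e * e = e" "u \<in> jacobson" "w = e + u" using decomp by blast
    then have "is_unit_r e" using unit_add_jacobson[OF w jacobson_minus[OF eu(2)]] by simp
    then have "e = 1" using eu(1) idem_unit_eq_one by blast
    with eu show ?thesis by simp
  qed
  show ?thesis
    unfolding uniquely_clean_def idem_def
  proof (intro allI ex_ex1I)
    fix a :: 'a
    obtain e u where e: "e * e = e" and u: "u \<in> jacobson" and a: "a = e + u" using decomp by blast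
    have "is_unit_r (2 * e - 1 + u)"
      using unit_add_jacobson[OF _ u] idem_reflection_square[OF e] unfolding is_unit_r_def by blast
    moreover have "a = (1 - e) + (2 * e - 1 + u)" using a by (simp add: algebra_simps mult_2)
    ultimately show "\<exists>p. fst p * fst p = fst p \<and> is_unit_r (snd p) \<and> a = fst p + snd p"
      using idem_one_minus[OF e] by (metis fst_conv snd_conv)
  next
    fix a :: 'a and p q :: "'a \<times> 'a"
    assume p: "fst p * fst p = fst p \<and> is_unit_r (snd p) \<and> a = fst p + snd p"
      and q: "fst q * fst q = fst q \<and> is_unit_r (snd q) \<and> a = fst q + snd q"
    have "fst p - fst q = (snd q - 1) - (snd p - 1)"
      using p q by (simp add: algebra_simps)
    then have "fst p - fst q \<in> jacobson" using unit p q jacobson_diff by metis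
    then have "fst p = fst q"
      using commuting_idems_eq_mod_jacobson abelianD[OF ab] p q by metis
    with p q show "p = q" by (simp add: prod_eq_iff)
  qed
qed

lemma strongly_J_star_clean_uniquely_clean:
  fixes st :: "'a::ring_1 \<Rightarrow> 'a"
  assumes "is_involution st" and sj: "strongly_J_star_clean st"
  shows "uniquely_clean TYPE('a)"
proof (rule uniquely_clean_if_abelian_idem_add_jacobson)
  show "\<exists>e u. e * e = e \<and> u \<in> jacobson \<and> a = e + u" for a :: 'a
    using strongly_J_star_cleanE[OF sj] by metis
qed (rule strongly_J_star_clean_abelian[OF assms])

lemma strongly_J_star_clean_if_uniquely_clean:
  fixes st :: "'a::ring_1 \<Rightarrow> 'a"
  assumes inv: "is_involution st" and uc: "uniquely_clean TYPE('a)"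
    and skew: "\<And>a. a - st a \<in> jacobson"
  shows "strongly_J_star_clean st"
  unfolding strongly_J_star_clean_def projection_def
proof
  fix a :: 'a
  obtain g v where g: "g * g = g" and v: "is_unit_r v" and a: "a = g + v"
    by (rule uniquely_clean_exists[OF uc])
  have ab: "abelian TYPE('a)" using uniquely_clean_abelian[OF uc] .
  let ?e = "1 - g"
  have e: "?e * ?e = ?e" using idem_one_minus[OF g] .
  have "st ?e * st ?e = st ?e" using e involution_mult[OF inv, of ?e ?e] by simp
  then have "?e = st ?e" using commuting_idems_eq_mod_jacobson[OF e] abelianD[OF ab] skew by metis
  moreover have "g * 2 + (v - 1) \<in> jacobson"
    using jacobson_add jacobson_mult_left uniquely_clean_two_jacobson[OF uc]
      uniquely_clean_unit_minus_one_jacobson[OF uc v] by blast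
  moreover have "a = ?e + (g * 2 + (v - 1))" using a by (simp add: algebra_simps mult_2_right)
  moreover have "a * ?e = ?e * a" using abelianD[OF ab e] by simp
  ultimately show "\<exists>e u. (e * e = e \<and> st e = e) \<and> u \<in> jacobson \<and> a = e + u \<and> a * e = e * a"
    using e by metis
qed

lemma uniquely_clean_diff_jacobson_iff_add_jacobson:
  fixes st :: "'a::ring_1 \<Rightarrow> 'a"
  assumes "uniquely_clean TYPE('a)"
  shows "(\<forall>a. a - st a \<in> jacobson) \<longleftrightarrow> (\<forall>a. a + st a \<in> jacobson)"
proof -
  have two: "st a * 2 \<in> jacobson" for a
    using jacobson_mult_left uniquely_clean_two_jacobson[OF assms] by blast
  have "a + st a = (a - st a) + st a * 2" "a - st a = (a + st a) - st a * 2" for a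
    by (simp_all add: algebra_simps mult_2_right)
  then show ?thesis using two jacobson_add jacobson_diff by metis
qed

theorem lemma3p1:
  fixes st :: "'a::ring_1 \<Rightarrow> 'a"
  assumes "is_involution st"
  shows "(strongly_J_star_clean st \<longleftrightarrow>
            uniquely_clean TYPE('a) \<and> (\<forall>a. a - st a \<in> jacobson))
       \<and> (strongly_J_star_clean st \<longleftrightarrow>
            uniquely_clean TYPE('a) \<and> (\<forall>a. a + st a \<in> jacobson))"
proof -
  have "strongly_J_star_clean st \<longleftrightarrow> uniquely_clean TYPE('a) \<and> (\<forall>a. a - st a \<in> jacobson)"
    using strongly_J_star_clean_uniquely_clean[OF assms]
      strongly_J_star_clean_diff_involution_jacobson[OF assms]
      strongly_J_star_clean_if_uniquely_clean[OF assms] by blast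
  then show ?thesis using uniquely_clean_diff_jacobson_iff_add_jacobson[of st] by blast
qed

end
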